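(* Let $0\le r\le n$, $A\in\mathcal{A}_{n+1,r+1}$, and fix a tiling of $\Gamma(X(A))$. Consider the labels of the northwest boundary edges at the termination of the fusion-exchange algorithm applied to $A$, and let $L$ and $J$ be two such labels with $J\succ L$. Then: (i) if $L$ and $J$ both label horizontal edges, the edge labeled $J$ is east of the edge labeled $L$; (ii) if $L$ and $J$ both label vertical edges, the edge labeled $J$ is south of the edge labeled $L$; (iii) if $L$ and $J$ both label diagonal edges, the edge labeled $J$ is north of the edge labeled $L$.
   Context: Words and diagrams. For $0\le r\le n$ let $B_n^r$ be the set of words $X\in\{H,L,0\}^n$ with exactly $r$ letters $L$. If $X$ has $k$ letters $H$, $r$ letters $L$ and $\ell$ letters $0$, its rhombic diagram $\Gamma(X)$ is the closed region bounded by two paths of unit steps, using the directions west (horizontal), south (vertical) and southwest (diagonal: a fixed unit vector strictly between west and south), both going from a point $P$ to a point $Q$: the northwest boundary consists of $\ell$ west steps, then $r$ southwest steps, then $k$ south steps; the southeast boundary is obtained by reading $X$ left to right and taking a west step for each $0$, a southwest step for each $L$, a south step for each $H$. A tiling of $\Gamma(X)$ is a tiling by unit rhombi of three kinds: squares (horizontal and vertical edges), tall rhombi (vertical and diagonal edges), short rhombi (horizontal and diagonal edges). Each tile has two edges on its lower-right side: its east edge (vertical for squares and tall rhombi, diagonal for short rhombi) and its south edge (horizontal for squares and short rhombi, diagonal for tall rhombi); the parallel edges on its upper-left side are its west and north edges. Assemblées. An assemblée of size $(m,s)$ is a collection of $s$ nonempty, pairwise disjoint, linearly ordered sets (blocks)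 with union $\{1,\dots,m\}$; the last element of a block is its block-end. Blocks are listed in the canonical order with decreasing block-ends, and the assemblée is identified with the concatenated word. $\mathcal{A}_{m,s}$ is the set of these. For $A\in\mathcal{A}_{n+1,r+1}$ with block-ends $b_1>\dots>b_{r+1}$, a non-block-end element $x$ is an increase if $x+1$ appears to the right of $x$ in $A$, and a decrease otherwise (so $n+1$, if not a block-end, is a decrease). $X(A)\in B_n^r$ is obtained from $A$ by deleting its last letter $b_{r+1}$ and replacing each increase by $H$, each decrease by $0$ and each remaining block-end by $L$. Fusion-exchange algorithm. A label is a finite, possibly empty, set of consecutive integers; for labels $E,S$ write $E\succ S$ if both are nonempty and $\min E=\max S+1$. Given $A\in\mathcal{A}_{n+1,r+1}$ and a tiling of $\Gamma(X(A))$: initially the southeast boundary edges, in order from $P$ to $Q$, receive the singleton labels of the letters of $A$ from left to right, $b_{r+1}$ omitted. Step: choose a tile whose east and south edges are labeled, say by $E$ and $S$, and whose west and north edges are not. (R I) If $E\succ S$ and the south edge is horizontal: west edge gets $E\cup S$, north edge gets $\emptyset$, place $\alpha$ in the tile. (R II) If $S\succ E$ and the east edge is vertical: north edge gets $E\cup S$, west edge gets $\emptyset$, place $\beta$. (R III) Otherwise: west edge gets $E$, north edge gets $S$, and place $q$ if $E\ne\emptyset$ and $S\ne\emptyset$. Repeat until every edge is labeled (termination). *)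

theory Defs
  imports Main
begin

text \<open>An assemblee of size (m,s) is represented in its canonical order: a list of
  s nonempty blocks (each block a list, i.e. a linearly ordered set), pairwise disjoint,
  with union {1..m}, listed with strictly decreasing block-ends (last elements).\<close>

definition assemblee :: "nat \<Rightarrow> nat \<Rightarrow> nat list list \<Rightarrow> bool" where
  "assemblee m s A \<longleftrightarrow>
     length A = s \<and> (\<forall>b\<in>set A. b \<noteq> []) \<and> distinct (concat A) \<and>
     set (concat A) = {1..m} \<and> sorted_wrt (>) (map last A)"

definition asm_word :: "nat list list \<Rightarrow> nat list" where
  "asm_word A = concat A"

definition block_ends :: "nat list list \<Rightarrow> nat set" where
  "block_ends A = set (map last A)"

definition is_increase :: "nat list \<Rightarrow> nat \<Rightarrow> bool" where
  "is_increase w i \<longleftrightarrow> (\<exists>j. i < j \<and> j < length w \<and> w ! j = w ! i + 1)"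

datatype letter = LH | LL | L0

definition XA :: "nat list list \<Rightarrow> letter list" where
  "XA A = (let w = asm_word A in
     map (\<lambda>i. if w ! i \<in> block_ends A then LL
               else if is_increase w i then LH else L0) [0..<length w - 1])"

datatype dir = Hor | Diag | Vert   \<comment> \<open>west, southwest, south steps\<close>

fun dir_of :: "letter \<Rightarrow> dir" where
  "dir_of L0 = Hor" | "dir_of LL = Diag" | "dir_of LH = Vert"

fun drank :: "dir \<Rightarrow> nat" where
  "drank Hor = 0" | "drank Diag = 1" | "drank Vert = 2"

text \<open>Northwest boundary of Gamma(X): l west steps, r southwest steps, k south steps.\<close>
definition nw_boundary :: "letter list \<Rightarrow> dir list" where
  "nw_boundary X = (let ds = map dir_of X in
     filter (\<lambda>d. d = Hor) ds @ filter (\<lambda>d. d = Diag) ds @ filter (\<lambda>d. d = Vert) ds)"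

text \<open>A labelled path from P to Q: list of edges (direction, label).\<close>
type_synonym lpath = "(dir \<times> nat set) list"

definition lab_succ :: "nat set \<Rightarrow> nat set \<Rightarrow> bool" where
  "lab_succ E S \<longleftrightarrow> E \<noteq> {} \<and> S \<noteq> {} \<and> Min E = Max S + 1"

text \<open>A tile can be placed on the current frontier at position i if the edges i, i+1
  are its east and south edges: (vertical, horizontal) = square,
  (vertical, diagonal) = tall rhombus, (diagonal, horizontal) = short rhombus.\<close>
definition valid_tile :: "lpath \<Rightarrow> nat \<Rightarrow> bool" where
  "valid_tile p i \<longleftrightarrow> Suc i < length p \<and> drank (fst (p ! i)) > drank (fst (p ! Suc i))"

text \<open>One step of the fusion-exchange algorithm: the east edge (position i) has label E,
  the south edge (position i+1) has label S; afterwards the frontier goes along the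
  north edge (position i) and then the west edge (position i+1).\<close>
definition fe_step :: "lpath \<Rightarrow> nat \<Rightarrow> lpath" where
  "fe_step p i = (let (de, E) = p ! i; (ds, S) = p ! Suc i;
      (W, N) = (if lab_succ E S \<and> ds = Hor then (E \<union> S, {})
                else if lab_succ S E \<and> de = Vert then ({}, E \<union> S)
                else (E, S))
    in p[i := (ds, N), Suc i := (de, W)])"

fun fe_valid :: "lpath \<Rightarrow> nat list \<Rightarrow> bool" where
  "fe_valid p [] = True"
| "fe_valid p (i # is) = (valid_tile p i \<and> fe_valid (fe_step p i) is)"

fun fe_run :: "lpath \<Rightarrow> nat list \<Rightarrow> lpath" where
  "fe_run p [] = p"
| "fe_run p (i # is) = fe_run (fe_step p i) is"

definition fe_init :: "nat list list \<Rightarrow> lpath" where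
  "fe_init A = (let w = asm_word A; X = XA A in
     map (\<lambda>i. (dir_of (X ! i), {w ! i})) [0..<length w - 1])"

text \<open>A tiling of Gamma(X(A)) together with an order of processing its tiles is a
  sequence of tile placements starting from the southeast boundary and ending at the
  northwest boundary.\<close>
definition is_tiling_order :: "nat list list \<Rightarrow> nat list \<Rightarrow> bool" where
  "is_tiling_order A ts \<longleftrightarrow> fe_valid (fe_init A) ts \<and>
     map fst (fe_run (fe_init A) ts) = nw_boundary (XA A)"

definition fe_final :: "nat list list \<Rightarrow> nat list \<Rightarrow> lpath" where
  "fe_final A ts = fe_run (fe_init A) ts"

end

theory Submission
  imports Defs
begin

(* Both claims follow from two invariants of the frontier (the path from P to Q through the
   edges labelled so far, listed from P to Q), each saying that the frontier is sorted for a
   relation on edges. For x before y: the label of y is not the successor of that of x if x is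
   horizontal, and the label of x is not the successor of that of y if y is vertical
   (succ_compatible); diagonal edges with nonempty labels have decreasing label maxima
   (diag_decreasing). A step replaces two adjacent edges, so it only has to be checked that the
   new pair relates to itself and to every other edge as the old pair did (tile_preserves);
   for the fusions this is Max (E \<union> S) = Max E and Min (E \<union> S) = Min S when E \<succ> S. On the
   southeast boundary the first invariant is the definition of increases, the second the
   decreasing order of the block-ends. *)

type_synonym edge = "dir \<times> nat set"

lemma lab_succ_singleton [simp]: "lab_succ {x} {y} \<longleftrightarrow> x = Suc y"
  by (simp add: lab_succ_def)

lemma lab_succ_empty [simp]: "\<not> lab_succ {} S" "\<not> lab_succ E {}"
  by (simp_all add: lab_succ_def)

lemma lab_succ_nonempty: "lab_succ E S \<Longrightarrow> E \<noteq> {} \<and> S \<noteq> {}"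
  by (simp add: lab_succ_def)

lemma lab_succ_Max_less:
  assumes "finite E" "lab_succ E S"
  shows "Max S < Max E"
proof -
  have "E \<noteq> {}" "Min E = Max S + 1" using assms(2) by (simp_all add: lab_succ_def)
  moreover have "Min E \<le> Max E" using assms(1) \<open>E \<noteq> {}\<close> by (simp add: Min_le)
  ultimately show ?thesis by linarith
qed

lemma lab_succ_irrefl: "finite E \<Longrightarrow> \<not> lab_succ E E"
  using lab_succ_Max_less by blast

lemma Max_Un_lab_succ:
  assumes "finite E" "finite S" "lab_succ E S"
  shows "Max (E \<union> S) = Max E"
proof -
  have "Max S < Max E" using assms(1,3) by (rule lab_succ_Max_less)
  moreover have "Max (E \<union> S) = max (Max E) (Max S)" using assms by (simp add: lab_succ_def Max_Un)
  ultimately show ?thesis by linarith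
qed

lemma Min_Un_lab_succ:
  assumes "finite E" "finite S" "lab_succ E S"
  shows "Min (E \<union> S) = Min S"
proof -
  have "Min S \<le> Max S" "Min E = Max S + 1" using assms by (simp_all add: lab_succ_def)
  moreover have "Min (E \<union> S) = min (Min E) (Min S)" using assms by (simp add: lab_succ_def Min_Un)
  ultimately show ?thesis by linarith
qed

lemma lab_succ_Un_right_iff:
  assumes "finite E" "finite S" "lab_succ E S"
  shows "lab_succ J (E \<union> S) \<longleftrightarrow> lab_succ J E"
  using Max_Un_lab_succ[OF assms] assms(3) by (simp add: lab_succ_def)

lemma lab_succ_Un_left_iff:
  assumes "finite E" "finite S" "lab_succ E S"
  shows "lab_succ (E \<union> S) L \<longleftrightarrow> lab_succ S L"
  using Min_Un_lab_succ[OF assms] assms(3) by (simp add: lab_succ_def)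

lemma list_update_adjacent:
  "Suc i < length p \<Longrightarrow> p[i := x, Suc i := y] = take i p @ x # y # drop (Suc (Suc i)) p"
  by (simp add: upd_conv_take_nth_drop nth_append take_Suc_conv_app_nth Cons_nth_drop_Suc)

lemma sorted_wrt_splice:
  assumes "sorted_wrt R (xs @ ys @ zs)" "sorted_wrt R ys'"
    and "\<And>x. \<forall>y\<in>set ys. R x y \<Longrightarrow> \<forall>y\<in>set ys'. R x y"
    and "\<And>z. \<forall>y\<in>set ys. R y z \<Longrightarrow> \<forall>y\<in>set ys'. R y z"
  shows "sorted_wrt R (xs @ ys' @ zs)"
  using assms(1,2) by (auto simp: sorted_wrt_append intro: assms(3,4)[rule_format])

lemma sorted_wrt_filter_nth:
  assumes "sorted_wrt R (filter P xs)" "i < j" "j < length xs" "P (xs ! i)" "P (xs ! j)"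
  shows "R (xs ! i) (xs ! j)"
proof -
  have "sorted_wrt R (filter P (take j xs) @ filter P (drop j xs))"
    using assms(1) by (simp flip: filter_append)
  moreover have "xs ! i \<in> set (filter P (take j xs))"
    using assms(2-4) by (auto simp: in_set_conv_nth intro: exI[of _ i])
  moreover have "xs ! j \<in> set (filter P (drop j xs))"
    using assms(3,5) by (simp add: Cons_nth_drop_Suc[symmetric])
  ultimately show ?thesis unfolding sorted_wrt_append by blast
qed

lemma filter_eq_singleton: "distinct xs \<Longrightarrow> x \<in> set xs \<Longrightarrow> filter (\<lambda>y. y = x) xs = [x]"
  by (induction xs) (auto simp: filter_empty_conv)

(* fe_step [e, s] 0 is the list [north edge, west edge] of the tile with east edge e and
   south edge s. *)
lemma fe_step_splice:
  "Suc i < length p \<Longrightarrow>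
     fe_step p i = take i p @ fe_step [p ! i, p ! Suc i] 0 @ drop (Suc (Suc i)) p"
  by (simp add: fe_step_def list_update_adjacent split: prod.split)

lemma fe_step_pair:
  "fe_step [(de, E), (ds, S)] 0 =
     (if lab_succ E S \<and> ds = Hor then [(Hor, {}), (de, E \<union> S)]
      else if lab_succ S E \<and> de = Vert then [(ds, E \<union> S), (Vert, {})]
      else [(ds, S), (de, E)])"
  by (simp add: fe_step_def)

lemma fe_step_pair_cases:
  obtains (fuse_west) "lab_succ E S" "ds = Hor"
    "fe_step [(de, E), (ds, S)] 0 = [(Hor, {}), (de, E \<union> S)]"
  | (fuse_north) "lab_succ S E" "de = Vert"
    "fe_step [(de, E), (ds, S)] 0 = [(ds, E \<union> S), (Vert, {})]"
  | (exchange) "lab_succ E S \<longrightarrow> ds \<noteq> Hor" "lab_succ S E \<longrightarrow> de \<noteq> Vert"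
    "fe_step [(de, E), (ds, S)] 0 = [(ds, S), (de, E)]"
  using fe_step_pair[of de E ds S] by metis

lemma labels_fe_step_pair_subset:
  assumes "y \<in> set (fe_step [(de, E), (ds, S)] 0)"
  shows "snd y \<subseteq> E \<union> S"
  using assms by (cases rule: fe_step_pair_cases[where E = E and S = S and de = de and ds = ds]) auto

definition finite_labels :: "lpath \<Rightarrow> bool" where
  "finite_labels p \<longleftrightarrow> (\<forall>e\<in>set p. finite (snd e))"

lemma finite_labels_nth: "finite_labels p \<Longrightarrow> k < length p \<Longrightarrow> finite (snd (p ! k))"
  by (simp add: finite_labels_def)

lemma finite_labels_fe_step:
  assumes "finite_labels p" "Suc i < length p"
  shows "finite_labels (fe_step p i)"
  unfolding finite_labels_def
proof
  fix y assume y: "y \<in> set (fe_step p i)"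
  obtain de E where e: "p ! i = (de, E)" by (cases "p ! i")
  obtain ds S where s: "p ! Suc i = (ds, S)" by (cases "p ! Suc i")
  have "set (fe_step p i) \<subseteq> set p \<union> set (fe_step [(de, E), (ds, S)] 0)"
    unfolding fe_step_splice[OF assms(2)] e s set_append
    using set_take_subset[of i p] set_drop_subset[of _ p] by blast
  with y consider "y \<in> set p" | "snd y \<subseteq> E \<union> S"
    using labels_fe_step_pair_subset by blast
  then show "finite (snd y)"
  proof cases
    case 1
    then show ?thesis using assms(1) by (simp add: finite_labels_def)
  next
    case 2
    moreover have "finite E" "finite S"
      using finite_labels_nth[OF assms(1), of i] finite_labels_nth[OF assms(1), of "Suc i"] assms(2) e s
      by simp_all
    ultimately show ?thesis by (simp add: finite_subset)
  qed
qed

lemma finite_labels_fe_run: "fe_valid p ts \<Longrightarrow> finite_labels p \<Longrightarrow> finite_labels (fe_run p ts)"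
  by (induction ts arbitrary: p) (simp_all add: valid_tile_def finite_labels_fe_step)

definition tile_preserves :: "(edge \<Rightarrow> edge \<Rightarrow> bool) \<Rightarrow> edge \<Rightarrow> edge \<Rightarrow> bool" where
  "tile_preserves R e s \<longleftrightarrow> sorted_wrt R (fe_step [e, s] 0) \<and>
     (\<forall>x. R x e \<longrightarrow> R x s \<longrightarrow> (\<forall>y\<in>set (fe_step [e, s] 0). R x y)) \<and>
     (\<forall>z. R e z \<longrightarrow> R s z \<longrightarrow> (\<forall>y\<in>set (fe_step [e, s] 0). R y z))"

lemma sorted_wrt_fe_step:
  assumes "sorted_wrt R p" "Suc i < length p" "tile_preserves R (p ! i) (p ! Suc i)"
  shows "sorted_wrt R (fe_step p i)"
proof -
  have "take i p @ [p ! i, p ! Suc i] @ drop (Suc (Suc i)) p = p"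
    using assms(2) by (simp add: Cons_nth_drop_Suc)
  with assms(1) have "sorted_wrt R (take i p @ [p ! i, p ! Suc i] @ drop (Suc (Suc i)) p)"
    by simp
  then show ?thesis
    unfolding fe_step_splice[OF assms(2)]
    by (rule sorted_wrt_splice) (use assms(3) in \<open>auto simp: tile_preserves_def\<close>)
qed

lemma sorted_wrt_fe_run:
  assumes "fe_valid p ts" "finite_labels p" "sorted_wrt R p"
    and tile: "\<And>de E ds S. finite E \<Longrightarrow> finite S \<Longrightarrow> drank ds < drank de \<Longrightarrow>
      tile_preserves R (de, E) (ds, S)"
  shows "sorted_wrt R (fe_run p ts)"
  using assms(1-3)
proof (induction ts arbitrary: p)
  case Nil
  then show ?case by simp
next
  case (Cons i ts)
  obtain de E where e: "p ! i = (de, E)" by (cases "p ! i")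
  obtain ds S where s: "p ! Suc i = (ds, S)" by (cases "p ! Suc i")
  have len: "Suc i < length p" and "drank ds < drank de"
    using Cons.prems(1) e s by (simp_all add: valid_tile_def)
  moreover have "finite E" "finite S"
    using finite_labels_nth[OF Cons.prems(2), of i] finite_labels_nth[OF Cons.prems(2), of "Suc i"] len e s
    by simp_all
  ultimately have "sorted_wrt R (fe_step p i)"
    using sorted_wrt_fe_step[OF Cons.prems(3) len] tile e s by simp
  moreover have "fe_valid (fe_step p i) ts" "finite_labels (fe_step p i)"
    using Cons.prems(1,2) len finite_labels_fe_step by simp_all
  ultimately show ?case using Cons.IH by simp
qed

definition succ_compatible :: "edge \<Rightarrow> edge \<Rightarrow> bool" where
  "succ_compatible x y \<longleftrightarrow>
     (lab_succ (snd y) (snd x) \<longrightarrow> fst x \<noteq> Hor) \<and> (lab_succ (snd x) (snd y) \<longrightarrow> fst y \<noteq> Vert)"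

definition diag_decreasing :: "edge \<Rightarrow> edge \<Rightarrow> bool" where
  "diag_decreasing x y \<longleftrightarrow> fst x = Diag \<longrightarrow> fst y = Diag \<longrightarrow> snd x \<noteq> {} \<longrightarrow> snd y \<noteq> {} \<longrightarrow>
     Max (snd y) < Max (snd x)"

lemma tile_preserves_succ_compatible:
  assumes "finite E" "finite S" "drank ds < drank de"
  shows "tile_preserves succ_compatible (de, E) (ds, S)"
proof -
  have "de \<noteq> Hor" "ds \<noteq> Vert" using assms(3) by (cases de; cases ds; simp)+
  show ?thesis
  proof (cases rule: fe_step_pair_cases[where E = E and S = S and de = de and ds = ds])
    case fuse_west
    then show ?thesis
      using lab_succ_Un_right_iff[OF assms(1,2) fuse_west(1)]
        lab_succ_Un_left_iff[OF assms(1,2) fuse_west(1)] \<open>de \<noteq> Hor\<close>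
      by (simp add: tile_preserves_def succ_compatible_def)
  next
    case fuse_north
    then show ?thesis
      using lab_succ_Un_right_iff[OF assms(2,1) fuse_north(1)]
        lab_succ_Un_left_iff[OF assms(2,1) fuse_north(1)] \<open>ds \<noteq> Vert\<close>
      by (simp add: tile_preserves_def succ_compatible_def Un_commute)
  next
    case exchange
    then show ?thesis by (simp add: tile_preserves_def succ_compatible_def)
  qed
qed

lemma tile_preserves_diag_decreasing:
  assumes "finite E" "finite S" "drank ds < drank de"
  shows "tile_preserves diag_decreasing (de, E) (ds, S)"
proof -
  have "de \<noteq> ds" using assms(3) by auto
  show ?thesis
  proof (cases rule: fe_step_pair_cases[where E = E and S = S and de = de and ds = ds])
    case fuse_west
    then show ?thesis
      using Max_Un_lab_succ[OF assms(1,2) fuse_west(1)] lab_succ_nonempty[OF fuse_west(1)]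
      by (simp add: tile_preserves_def diag_decreasing_def)
  next
    case fuse_north
    then show ?thesis
      using Max_Un_lab_succ[OF assms(2,1) fuse_north(1)] lab_succ_nonempty[OF fuse_north(1)]
      by (simp add: tile_preserves_def diag_decreasing_def Un_commute)
  next
    case exchange
    moreover have "diag_decreasing (ds, S) (de, E)"
      using \<open>de \<noteq> ds\<close> by (auto simp: diag_decreasing_def)
    ultimately show ?thesis by (simp add: tile_preserves_def)
  qed
qed

lemma nth_fe_init:
  assumes "k < length (asm_word A) - 1"
  shows "fe_init A ! k =
    (dir_of (if asm_word A ! k \<in> block_ends A then LL
             else if is_increase (asm_word A) k then LH else L0), {asm_word A ! k})"
  using assms by (simp add: fe_init_def XA_def Let_def)

lemma length_fe_init: "length (fe_init A) = length (asm_word A) - 1"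
  by (simp add: fe_init_def Let_def)

lemma finite_labels_fe_init: "finite_labels (fe_init A)"
  by (auto simp: finite_labels_def fe_init_def Let_def)

lemma sorted_wrt_succ_compatible_fe_init:
  assumes "distinct (asm_word A)"
  shows "sorted_wrt succ_compatible (fe_init A)"
  unfolding sorted_wrt_iff_nth_less
proof (intro allI impI)
  fix a b assume ab: "a < b" and b: "b < length (fe_init A)"
  define w where "w = asm_word A"
  have a': "a < length w - 1" and b': "b < length w - 1"
    using ab b by (simp_all add: length_fe_init w_def)
  show "succ_compatible (fe_init A ! a) (fe_init A ! b)"
    unfolding succ_compatible_def
  proof (intro conjI impI)
    assume "lab_succ (snd (fe_init A ! b)) (snd (fe_init A ! a))"
    then have "w ! b = w ! a + 1" using nth_fe_init a' b' by (simp add: w_def)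
    then have "is_increase w a" using ab b' unfolding is_increase_def by auto
    then show "fst (fe_init A ! a) \<noteq> Hor" using nth_fe_init[OF a'[unfolded w_def]] by (simp add: w_def)
  next
    assume "lab_succ (snd (fe_init A ! a)) (snd (fe_init A ! b))"
    then have succ: "w ! a = w ! b + 1" using nth_fe_init a' b' by (simp add: w_def)
    have "\<not> is_increase w b"
    proof
      assume "is_increase w b"
      then obtain j where "b < j" "j < length w" "w ! j = w ! a"
        using succ unfolding is_increase_def by auto
      then have "j = a" using assms a' nth_eq_iff_index_eq by (fastforce simp: w_def)
      then show False using ab \<open>b < j\<close> by simp
    qed
    then show "fst (fe_init A ! b) \<noteq> Vert" using nth_fe_init[OF b'[unfolded w_def]] by (simp add: w_def)
  qed
qed

lemma filter_last_concat:
  assumes "\<forall>b\<in>set A. b \<noteq> []" "distinct (concat A)"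
  shows "filter (\<lambda>x. x \<in> last ` set A) (concat A) = map last A"
  using assms
proof (induction A)
  case Nil
  then show ?case by simp
next
  case (Cons b A)
  have disj: "set b \<inter> set (concat A) = {}" and "distinct b" and "last b \<in> set b"
    using Cons.prems by auto
  have ends: "last ` set A \<subseteq> set (concat A)" using Cons.prems(1) by auto
  have "x \<notin> last ` set A" if "x \<in> set b" for x
    using that disj ends by blast
  then have "filter (\<lambda>x. x \<in> last ` set (b # A)) b = filter (\<lambda>x. x = last b) b"
    by (intro filter_cong) auto
  also have "\<dots> = [last b]" using \<open>distinct b\<close> \<open>last b \<in> set b\<close> by (rule filter_eq_singleton)
  finally have head: "filter (\<lambda>x. x \<in> last ` set (b # A)) b = [last b]" .
  have "filter (\<lambda>x. x \<in> last ` set (b # A)) (concat A) = filter (\<lambda>x. x \<in> last ` set A) (concat A)"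
    using disj \<open>last b \<in> set b\<close> by (intro filter_cong) auto
  then show ?case using Cons head by simp
qed

lemma sorted_wrt_diag_decreasing_fe_init:
  assumes "assemblee m s A"
  shows "sorted_wrt diag_decreasing (fe_init A)"
  unfolding sorted_wrt_iff_nth_less
proof (intro allI impI)
  fix a b assume ab: "a < b" and b: "b < length (fe_init A)"
  define w where "w = asm_word A"
  have ends: "sorted_wrt (>) (filter (\<lambda>x. x \<in> block_ends A) w)"
    using assms filter_last_concat[of A] by (simp add: assemblee_def block_ends_def asm_word_def w_def)
  have a': "a < length w - 1" and b': "b < length w - 1"
    using ab b by (simp_all add: length_fe_init w_def)
  show "diag_decreasing (fe_init A ! a) (fe_init A ! b)"
    unfolding diag_decreasing_def
  proof (intro impI)
    assume "fst (fe_init A ! a) = Diag" "fst (fe_init A ! b) = Diag"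
    then have "w ! a \<in> block_ends A" "w ! b \<in> block_ends A"
      using nth_fe_init a' b' by (auto simp: w_def split: if_splits)
    then have "w ! b < w ! a" using sorted_wrt_filter_nth[OF ends ab] b' by simp
    then show "Max (snd (fe_init A ! b)) < Max (snd (fe_init A ! a))"
      using nth_fe_init a' b' by (simp add: w_def)
  qed
qed

lemma succ_compatible_nth:
  assumes "sorted_wrt succ_compatible p" "finite_labels p" "i < length p" "j < length p"
    and "lab_succ (snd (p ! j)) (snd (p ! i))"
  shows "(fst (p ! i) = Hor \<longrightarrow> j < i) \<and> (fst (p ! i) = Vert \<longrightarrow> i < j)"
proof -
  have "i \<noteq> j" using assms(5) lab_succ_irrefl finite_labels_nth[OF assms(2,3)] by blast
  then consider "i < j" | "j < i" by linarith
  then show ?thesis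
  proof cases
    case 1
    then have "fst (p ! i) \<noteq> Hor"
      using sorted_wrt_nth_less[OF assms(1) 1 assms(4)] assms(5) by (simp add: succ_compatible_def)
    then show ?thesis using 1 by simp
  next
    case 2
    then have "fst (p ! i) \<noteq> Vert"
      using sorted_wrt_nth_less[OF assms(1) 2 assms(3)] assms(5) by (simp add: succ_compatible_def)
    then show ?thesis using 2 by simp
  qed
qed

lemma diag_decreasing_nth:
  assumes "sorted_wrt diag_decreasing p" "finite_labels p" "i < length p" "j < length p"
    and "lab_succ (snd (p ! j)) (snd (p ! i))" "fst (p ! i) = Diag" "fst (p ! j) = Diag"
  shows "j < i"
proof (rule ccontr)
  assume "\<not> j < i"
  moreover have "i \<noteq> j" using assms(5) lab_succ_irrefl finite_labels_nth[OF assms(2,3)] by blast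
  ultimately have "i < j" by linarith
  then have "Max (snd (p ! j)) < Max (snd (p ! i))"
    using sorted_wrt_nth_less[OF assms(1) _ assms(4)] assms(5-7) lab_succ_nonempty
    by (simp add: diag_decreasing_def)
  moreover have "Max (snd (p ! i)) < Max (snd (p ! j))"
    using lab_succ_Max_less[OF finite_labels_nth[OF assms(2,4)] assms(5)] .
  ultimately show False by simp
qed

theorem lemma3p5:
  fixes n r :: nat and A :: "nat list list" and ts :: "nat list" and i j :: nat
  assumes "r \<le> n"
    and "assemblee (n + 1) (r + 1) A"
    and "is_tiling_order A ts"
    and "i < length (fe_final A ts)" and "j < length (fe_final A ts)"
    and "lab_succ (snd (fe_final A ts ! j)) (snd (fe_final A ts ! i))"
  shows "(fst (fe_final A ts ! i) = Hor \<and> fst (fe_final A ts ! j) = Hor \<longrightarrow> j < i)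
       \<and> (fst (fe_final A ts ! i) = Vert \<and> fst (fe_final A ts ! j) = Vert \<longrightarrow> i < j)
       \<and> (fst (fe_final A ts ! i) = Diag \<and> fst (fe_final A ts ! j) = Diag \<longrightarrow> j < i)"
proof -
  have run: "fe_valid (fe_init A) ts" and final: "fe_final A ts = fe_run (fe_init A) ts"
    using assms(3) by (simp_all add: is_tiling_order_def fe_final_def)
  have "distinct (asm_word A)" using assms(2) by (simp add: assemblee_def asm_word_def)
  have fin: "finite_labels (fe_final A ts)"
    unfolding final using run finite_labels_fe_init by (rule finite_labels_fe_run)
  have succ: "sorted_wrt succ_compatible (fe_final A ts)"
    unfolding final
    by (rule sorted_wrt_fe_run[OF run finite_labels_fe_init
          sorted_wrt_succ_compatible_fe_init[OF \<open>distinct (asm_word A)\<close>] tile_preserves_succ_compatible])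
  have diag: "sorted_wrt diag_decreasing (fe_final A ts)"
    unfolding final
    by (rule sorted_wrt_fe_run[OF run finite_labels_fe_init
          sorted_wrt_diag_decreasing_fe_init[OF assms(2)] tile_preserves_diag_decreasing])
  show ?thesis
    using succ_compatible_nth[OF succ fin assms(4-6)] diag_decreasing_nth[OF diag fin assms(4-6)]
    by blast
qed

end
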